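(* Let $A\in\mathbb{C}^{m\times n}$. Then the following are equivalent: (1) $A^{\mathfrak{m}}$ exists; (2) $\mathrm{rank}(AA^{\sim})=\mathrm{rank}(A^{\sim})$ and there exist $X\in\mathbb{C}^{m\times m}$ and a projector (idempotent matrix) $Y\in\mathbb{C}^{m\times m}$ such that $XAA^{\sim}-YX=I_m$, $AA^{\sim}X=XAA^{\sim}$ and $AA^{\sim}Y=0$. In this case, for any such $X$, $A^{\mathfrak{m}}=A^{\sim}X$.
   Context: For a positive integer $k$, the Minkowski metric matrix of order $k$ is $G_k=\mathrm{diag}(1,-I_{k-1})$ (with $G_1=(1)$). For $A\in\mathbb{C}^{m\times n}$, the Minkowski adjoint is $A^{\sim}=G_nA^*G_m$, where $A^*$ is the conjugate transpose. The Minkowski inverse of $A$, denoted $A^{\mathfrak{m}}$, is a matrix $Z\in\mathbb{C}^{n\times m}$ with $AZA=A$, $ZAZ=Z$, $(AZ)^{\sim}=AZ$, $(ZA)^{\sim}=ZA$ (unique if it exists). *)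

theory Defs
  imports "Jordan_Normal_Form.Schur_Decomposition" "Jordan_Normal_Form.DL_Rank"
begin

definition minkowski_G :: "nat \<Rightarrow> complex mat" where
  "minkowski_G k = mat k k (\<lambda>(i, j). if i = j then (if i = 0 then 1 else -1) else 0)"

definition minkowski_adj :: "complex mat \<Rightarrow> complex mat" where
  "minkowski_adj A = minkowski_G (dim_col A) * mat_adjoint A * minkowski_G (dim_row A)"

definition is_minkowski_inverse :: "complex mat \<Rightarrow> complex mat \<Rightarrow> bool" where
  "is_minkowski_inverse A Z \<longleftrightarrow>
     Z \<in> carrier_mat (dim_col A) (dim_row A) \<and>
     A * Z * A = A \<and> Z * A * Z = Z \<and>
     minkowski_adj (A * Z) = A * Z \<and> minkowski_adj (Z * A) = Z * A"

end

theory Submission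
  imports Defs
begin

text \<open>
  Put \<open>B = A A\<^sup>\<sim>\<close>; it is Minkowski self-adjoint, since \<open>\<sim>\<close> is an involutive
  anti-automorphism. If \<open>Z\<close> is a Minkowski inverse of \<open>A\<close>, then \<open>G = Z\<^sup>\<sim> Z\<close> is the group
  inverse of \<open>B\<close> with spectral idempotent \<open>P = A Z\<close>, and \<open>X = G - (I - P)\<close>, \<open>Y = I - P\<close>
  solve the system; the rank condition holds because \<open>A\<^sup>\<sim> = Z B\<close>.

  Conversely, the system forces \<open>B X B = B\<close>, so \<open>P = B X = X B\<close> is an idempotent with
  \<open>B P = B\<close>, and \<open>P\<close> turns out to be self-adjoint. The rank condition makes \<open>A\<close> injective on
  the column space of \<open>A\<^sup>\<sim>\<close>, so \<open>A\<^sup>\<sim>\<close> cancels from \<open>B D = B D'\<close>; this gives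
  \<open>A\<^sup>\<sim> P = A\<^sup>\<sim>\<close> and \<open>A\<^sup>\<sim> X\<^sup>\<sim> = A\<^sup>\<sim> X\<close>, from which the four defining equations
  follow for \<open>A\<^sup>\<sim> X\<close>.
\<close>

section \<open>Rank of a matrix product\<close>

lemma (in vectorspace) subspace_fin_dim:
  assumes W: "VectorSpace.subspace K W V" and fd: "fin_dim"
  shows "vectorspace.fin_dim K (vs W)"
proof -
  interpret W: vectorspace K "vs W" using subspace_is_vs[OF W] .
  have WC: "W \<subseteq> carrier V" using W unfolding VectorSpace.subspace_def submodule_def by auto
  have bounded: "finite A \<and> card A \<le> dim" if "A \<subseteq> carrier (vs W) \<and> W.lin_indpt A" for A
  proof -
    have "lin_indpt A" using that W WC span_li_not_depend(2)[of A W] unfolding VectorSpace.subspace_def by auto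
    then show ?thesis using li_le_dim[OF fd] that WC by auto
  qed
  have "\<exists>A. finite A \<and> maximal A (\<lambda>S. S \<subseteq> carrier (vs W) \<and> W.lin_indpt S)"
    by (rule maximal_exists[where N = dim and B = "{}"]) (use bounded in blast, auto simp: W.lin_dep_def)
  then obtain A where "finite A" and A: "maximal A (\<lambda>S. S \<subseteq> carrier (vs W) \<and> W.lin_indpt S)"
    by blast
  have "W.basis A" by (rule W.max_li_is_basis[OF A])
  then show ?thesis
    using \<open>finite A\<close> unfolding W.fin_dim_def W.basis_def by blast
qed

lemma (in vectorspace) dim_0_imp_carrier_trivial:
  assumes fd: "fin_dim" and "dim = 0"
  shows "carrier V = {\<zero>\<^bsub>V\<^esub>}"
proof -
  obtain A where "finite A" and A: "basis A" using finite_basis_exists[OF fd] by blast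
  then have "A = {}" using dim_basis \<open>dim = 0\<close> by auto
  then show ?thesis using A span_empty unfolding basis_def by auto
qed

lemma linear_map_mult_mat_vec_col_space:
  fixes M N :: "'a::field mat"
  assumes M: "M \<in> carrier_mat nr k" and N: "N \<in> carrier_mat k nc"
  shows "linear_map class_ring ((module_vec TYPE('a) k)\<lparr>carrier := vec_space.col_space k N\<rparr>)
           (module_vec TYPE('a) nr) (\<lambda>v. M *\<^sub>v v)"
proof -
  interpret VK: vec_space "TYPE('a)" k .
  have sub: "VectorSpace.subspace class_ring (VK.col_space N) VK.V"
    unfolding VK.col_space_def using N cols_dim by (intro VK.span_is_subspace) blast
  have vs: "vectorspace class_ring (VK.vs (VK.col_space N))" by (rule VK.subspace_is_vs[OF sub])
  have col: "v \<in> carrier_vec k" if "v \<in> VK.col_space N" for v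
    using sub that unfolding VectorSpace.subspace_def submodule_def by auto
  have "mod_hom class_ring (VK.vs (VK.col_space N)) (module_vec TYPE('a) nr) (\<lambda>v. M *\<^sub>v v)"
    using vectorspace.axioms(1)[OF vs] vectorspace.axioms(1)[OF vec_vs] M
    by (auto intro!: mod_hom.intro mod_hom_axioms.intro mult_add_distrib_mat_vec mult_mat_vec
        simp: LinearCombinations.module_hom_def Matrix.module_vec_def col)
  then show ?thesis using vs vec_vs by (intro linear_map.intro)
qed

lemma rank_nullity_mult_mat:
  fixes M N :: "'a::field mat"
  assumes M: "M \<in> carrier_mat nr k" and N: "N \<in> carrier_mat k nc"
  shows "vec_space.rank nr (M * N) + vectorspace.dim class_ring
           ((module_vec TYPE('a) k)\<lparr>carrier := {v \<in> vec_space.col_space k N. M *\<^sub>v v = 0\<^sub>v nr}\<rparr>)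
         = vec_space.rank k N"
proof -
  interpret VK: vec_space "TYPE('a)" k .
  interpret L: linear_map class_ring "VK.vs (VK.col_space N)" "module_vec TYPE('a) nr" "\<lambda>v. M *\<^sub>v v"
    by (rule linear_map_mult_mat_vec_col_space[OF M N])
  have MN: "M * N \<in> carrier_mat nr nc" using M N by simp
  have "L.imT = (\<lambda>v. M *\<^sub>v v) ` VK.col_space N"
    unfolding LinearCombinations.mod_hom.im_def[OF L.mod_hom_axioms] by simp
  also have "\<dots> = vec_space.col_space nr (M * N)"
    unfolding vec_space.col_space_eq[OF MN] VK.col_space_eq[OF N]
  proof (intro equalityI subsetI)
    fix y assume "y \<in> (\<lambda>v. M *\<^sub>v v) ` {y \<in> carrier_vec (dim_row N). \<exists>x\<in>carrier_vec (dim_col N). N *\<^sub>v x = y}"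
    then obtain x where "x \<in> carrier_vec nc" "y = M *\<^sub>v (N *\<^sub>v x)" using N by auto
    then show "y \<in> {y \<in> carrier_vec (dim_row (M * N)). \<exists>x\<in>carrier_vec (dim_col (M * N)). M * N *\<^sub>v x = y}"
      using M N by auto
  next
    fix y assume "y \<in> {y \<in> carrier_vec (dim_row (M * N)). \<exists>x\<in>carrier_vec (dim_col (M * N)). M * N *\<^sub>v x = y}"
    then obtain x where x: "x \<in> carrier_vec nc" and "y = M *\<^sub>v (N *\<^sub>v x)" using M N by auto
    moreover have "N *\<^sub>v x \<in> {y \<in> carrier_vec (dim_row N). \<exists>x\<in>carrier_vec (dim_col N). N *\<^sub>v x = y}"
      using x N by auto
    ultimately show "y \<in> (\<lambda>v. M *\<^sub>v v) ` {y \<in> carrier_vec (dim_row N). \<exists>x\<in>carrier_vec (dim_col N). N *\<^sub>v x = y}"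
      by blast
  qed
  finally have im: "L.imT = vec_space.col_space nr (M * N)" .
  have ker: "L.kerT = {v \<in> VK.col_space N. M *\<^sub>v v = 0\<^sub>v nr}"
    unfolding LinearCombinations.mod_hom.ker_def[OF L.mod_hom_axioms]
    by (simp add: Matrix.module_vec_def)
  have "vectorspace.fin_dim class_ring (VK.vs (VK.col_space N))"
    unfolding VK.col_space_def by (rule VK.fin_dim_span_cols[OF N])
  from L.rank_nullity[OF this] show ?thesis
    unfolding im ker unfolding vec_space.rank_def vec_space.col_space_def by simp
qed

lemma rank_mult_le:
  fixes M N :: "'a::field mat"
  assumes "M \<in> carrier_mat nr k" and "N \<in> carrier_mat k nc"
  shows "vec_space.rank nr (M * N) \<le> vec_space.rank k N"
  using rank_nullity_mult_mat[OF assms] by linarith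

lemma rank_mult_eq_imp_col_space_kernel_trivial:
  fixes M N :: "'a::field mat"
  assumes M: "M \<in> carrier_mat nr k" and N: "N \<in> carrier_mat k nc"
    and rank: "vec_space.rank nr (M * N) = vec_space.rank k N"
    and v: "v \<in> vec_space.col_space k N" and Mv: "M *\<^sub>v v = 0\<^sub>v nr"
  shows "v = 0\<^sub>v k"
proof -
  interpret VK: vec_space "TYPE('a)" k .
  interpret L: linear_map class_ring "VK.vs (VK.col_space N)" "module_vec TYPE('a) nr" "\<lambda>v. M *\<^sub>v v"
    by (rule linear_map_mult_mat_vec_col_space[OF M N])
  have ker: "L.kerT = {v \<in> VK.col_space N. M *\<^sub>v v = 0\<^sub>v nr}"
    unfolding LinearCombinations.mod_hom.ker_def[OF L.mod_hom_axioms]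
    by (simp add: Matrix.module_vec_def)
  have "L.V.fin_dim"
    unfolding VK.col_space_def by (rule VK.fin_dim_span_cols[OF N])
  then have "vectorspace.fin_dim class_ring (L.V.vs L.kerT)"
    by (rule L.V.subspace_fin_dim[OF L.kerT_is_subspace])
  moreover have "vectorspace.dim class_ring (L.V.vs L.kerT) = 0"
    using rank_nullity_mult_mat[OF M N] rank unfolding ker by simp
  ultimately have "carrier (L.V.vs L.kerT) = {\<zero>\<^bsub>L.V.vs L.kerT\<^esub>}"
    by (rule vectorspace.dim_0_imp_carrier_trivial[OF L.V.subspace_is_vs[OF L.kerT_is_subspace]])
  then show ?thesis using v Mv unfolding ker by (auto simp: Matrix.module_vec_def)
qed

lemma rank_mult_eq_cancel_left:
  fixes M N D1 D2 :: "'a::field mat"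
  assumes M: "M \<in> carrier_mat nr k" and N: "N \<in> carrier_mat k nc"
    and D1: "D1 \<in> carrier_mat nc p" and D2: "D2 \<in> carrier_mat nc p"
    and rank: "vec_space.rank nr (M * N) = vec_space.rank k N" and eq: "M * N * D1 = M * N * D2"
  shows "N * D1 = N * D2"
proof (rule mat_col_eqI)
  fix j assume "j < dim_col (N * D2)"
  then have j: "j < p" using D2 by simp
  have c1: "col D1 j \<in> carrier_vec nc" and c2: "col D2 j \<in> carrier_vec nc" using D1 D2 j by auto
  let ?v = "N *\<^sub>v (col D1 j - col D2 j)"
  have "?v \<in> vec_space.col_space k N"
    unfolding vec_space.col_space_eq[OF N] using N c1 c2 by auto
  moreover have "M *\<^sub>v ?v = 0\<^sub>v nr"
  proof -
    have "M *\<^sub>v ?v = (M * N) *\<^sub>v col D1 j - (M * N) *\<^sub>v col D2 j"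
      using M N c1 c2 by (simp add: mult_minus_distrib_mat_vec)
    also have "\<dots> = col (M * N * D1) j - col (M * N * D2) j"
      using col_mult2[OF mult_carrier_mat[OF M N] D1 j] col_mult2[OF mult_carrier_mat[OF M N] D2 j]
      by simp
    finally show ?thesis using eq M N D2 j by simp
  qed
  ultimately have "?v = 0\<^sub>v k"
    by (rule rank_mult_eq_imp_col_space_kernel_trivial[OF M N rank])
  then have diff: "N *\<^sub>v col D1 j - N *\<^sub>v col D2 j = 0\<^sub>v k"
    using N c1 c2 by (simp add: mult_minus_distrib_mat_vec)
  have "N *\<^sub>v col D1 j = N *\<^sub>v col D2 j"
  proof (rule eq_vecI)
    fix i assume "i < dim_vec (N *\<^sub>v col D2 j)"
    then show "(N *\<^sub>v col D1 j) $ i = (N *\<^sub>v col D2 j) $ i"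
      using arg_cong[OF diff, of "\<lambda>v. v $ i"] N by simp
  qed (use N in simp)
  then show "col (N * D1) j = col (N * D2) j"
    unfolding col_mult2[OF N D1 j] col_mult2[OF N D2 j] .
qed (use D1 D2 N in auto)

section \<open>The Minkowski adjoint\<close>

definition minkowski_sign :: "nat \<Rightarrow> complex" where
  "minkowski_sign i = (if i = 0 then 1 else -1)"

lemma minkowski_sign_square [simp]: "minkowski_sign i * minkowski_sign i = 1"
  by (simp add: minkowski_sign_def)

lemma cnj_minkowski_sign [simp]: "cnj (minkowski_sign i) = minkowski_sign i"
  by (simp add: minkowski_sign_def)

lemma minkowski_G_index:
  "i < k \<Longrightarrow> l < k \<Longrightarrow> minkowski_G k $$ (i, l) = (if i = l then minkowski_sign i else 0)"
  unfolding minkowski_G_def minkowski_sign_def by simp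

lemma minkowski_G_dims [simp]: "dim_row (minkowski_G k) = k" "dim_col (minkowski_G k) = k"
  unfolding minkowski_G_def by simp_all

lemma minkowski_G_mult:
  assumes "M \<in> carrier_mat k c"
  shows "minkowski_G k * M = mat k c (\<lambda>(i, j). minkowski_sign i * M $$ (i, j))"
proof (rule eq_matI)
  fix i j assume "i < dim_row (mat k c (\<lambda>(i, j). minkowski_sign i * M $$ (i, j)))"
    and "j < dim_col (mat k c (\<lambda>(i, j). minkowski_sign i * M $$ (i, j)))"
  then have i: "i < k" and j: "j < c" by auto
  have "(minkowski_G k * M) $$ (i, j) = (\<Sum>l = 0..<k. minkowski_G k $$ (i, l) * M $$ (l, j))"
    using i j assms by (simp add: scalar_prod_def)
  also have "\<dots> = (\<Sum>l = 0..<k. if l = i then minkowski_sign i * M $$ (i, j) else 0)"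
    using i by (intro sum.cong) (auto simp: minkowski_G_index)
  finally show "(minkowski_G k * M) $$ (i, j) = mat k c (\<lambda>(i, j). minkowski_sign i * M $$ (i, j)) $$ (i, j)"
    using i j by simp
qed (use assms in auto)

lemma mult_minkowski_G:
  assumes "M \<in> carrier_mat r k"
  shows "M * minkowski_G k = mat r k (\<lambda>(i, j). M $$ (i, j) * minkowski_sign j)"
proof (rule eq_matI)
  fix i j assume "i < dim_row (mat r k (\<lambda>(i, j). M $$ (i, j) * minkowski_sign j))"
    and "j < dim_col (mat r k (\<lambda>(i, j). M $$ (i, j) * minkowski_sign j))"
  then have i: "i < r" and j: "j < k" by auto
  have "(M * minkowski_G k) $$ (i, j) = (\<Sum>l = 0..<k. M $$ (i, l) * minkowski_G k $$ (l, j))"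
    using i j assms by (simp add: scalar_prod_def)
  also have "\<dots> = (\<Sum>l = 0..<k. if l = j then M $$ (i, j) * minkowski_sign j else 0)"
    using j by (intro sum.cong) (auto simp: minkowski_G_index)
  finally show "(M * minkowski_G k) $$ (i, j) = mat r k (\<lambda>(i, j). M $$ (i, j) * minkowski_sign j) $$ (i, j)"
    using i j by simp
qed (use assms in auto)

lemma minkowski_adj_eq_mat:
  assumes "A \<in> carrier_mat m n"
  shows "minkowski_adj A = mat n m (\<lambda>(i, j). minkowski_sign i * minkowski_sign j * cnj (A $$ (j, i)))"
proof -
  have adjoint: "mat_adjoint A = mat n m (\<lambda>(i, j). cnj (A $$ (j, i)))"
    using assms unfolding mat_adjoint_def by (auto simp: mat_of_rows_def)
  show ?thesis
    unfolding minkowski_adj_def adjoint using assms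
    by (auto simp: minkowski_G_mult[of _ n m] mult_minkowski_G[of _ n m] intro!: eq_matI)
qed

lemma minkowski_adj_dims [simp]:
  "dim_row (minkowski_adj A) = dim_col A" "dim_col (minkowski_adj A) = dim_row A"
  unfolding minkowski_adj_def by simp_all

lemma minkowski_adj_carrier [simp]: "A \<in> carrier_mat m n \<Longrightarrow> minkowski_adj A \<in> carrier_mat n m"
  by (rule carrier_matI) auto

lemma minkowski_adj_adj:
  assumes "A \<in> carrier_mat m n"
  shows "minkowski_adj (minkowski_adj A) = A"
  unfolding minkowski_adj_eq_mat[OF assms] minkowski_adj_eq_mat[OF mat_carrier]
  using assms by (intro eq_matI) (auto simp: algebra_simps)

lemma minkowski_adj_mult:
  assumes P: "P \<in> carrier_mat a b" and Q: "Q \<in> carrier_mat b c"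
  shows "minkowski_adj (P * Q) = minkowski_adj Q * minkowski_adj P"
proof (rule eq_matI)
  fix i j assume "i < dim_row (minkowski_adj Q * minkowski_adj P)"
    and "j < dim_col (minkowski_adj Q * minkowski_adj P)"
  then have i: "i < c" and j: "j < a" using P Q by auto
  let ?s = minkowski_sign
  have "(minkowski_adj Q * minkowski_adj P) $$ (i, j)
      = (\<Sum>l = 0..<b. (?s i * ?s l * cnj (Q $$ (l, i))) * (?s l * ?s j * cnj (P $$ (j, l))))"
    using i j P Q by (simp add: minkowski_adj_eq_mat[OF P] minkowski_adj_eq_mat[OF Q] scalar_prod_def)
  also have "\<dots> = (\<Sum>l = 0..<b. ?s i * ?s j * cnj (P $$ (j, l) * Q $$ (l, i)))"
  proof (rule sum.cong)
    fix l
    have "?s i * ?s l * cnj (Q $$ (l, i)) * (?s l * ?s j * cnj (P $$ (j, l)))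
        = (?s l * ?s l) * ?s i * ?s j * cnj (P $$ (j, l) * Q $$ (l, i))"
      by (simp add: algebra_simps)
    then show "?s i * ?s l * cnj (Q $$ (l, i)) * (?s l * ?s j * cnj (P $$ (j, l)))
        = ?s i * ?s j * cnj (P $$ (j, l) * Q $$ (l, i))"
      by simp
  qed simp
  also have "\<dots> = minkowski_adj (P * Q) $$ (i, j)"
    using i j P Q
    by (simp add: minkowski_adj_eq_mat[OF mult_carrier_mat[OF P Q]] scalar_prod_def sum_distrib_left)
  finally show "minkowski_adj (P * Q) $$ (i, j) = (minkowski_adj Q * minkowski_adj P) $$ (i, j)" ..
qed (use P Q in auto)

section \<open>Group inverses and the commuting system\<close>

lemma assoc_mult_mat_dims:
  fixes A B C :: "'a::semiring_0 mat"
  shows "dim_col A = dim_row B \<Longrightarrow> dim_col B = dim_row C \<Longrightarrow> A * B * C = A * (B * C)"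
  by (rule assoc_mult_mat[of A "dim_row A" "dim_col A" B "dim_col B" C "dim_col C"]) auto

lemma minus_zero_mat [simp]:
  "(A :: 'a::group_add mat) \<in> carrier_mat nr nc \<Longrightarrow> A - 0\<^sub>m nr nc = A"
  by (intro eq_matI) auto

lemma group_inverse_solves_system:
  fixes B G P :: "'a::ring_1 mat"
  assumes B: "B \<in> carrier_mat m m" and G: "G \<in> carrier_mat m m" and P: "P \<in> carrier_mat m m"
    and PP: "P * P = P" and BG: "B * G = P" and GB: "G * B = P"
    and PB: "P * B = B" and BP: "B * P = B" and PG: "P * G = G"
  shows "\<exists>X Y. X \<in> carrier_mat m m \<and> Y \<in> carrier_mat m m \<and> Y * Y = Y \<and>
           X * B - Y * X = 1\<^sub>m m \<and> B * X = X * B \<and> B * Y = 0\<^sub>m m m"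
proof -
  define Y where "Y = 1\<^sub>m m - P"
  define X where "X = G - Y"
  have I: "1\<^sub>m m \<in> carrier_mat m m" by simp
  have Y: "Y \<in> carrier_mat m m" unfolding Y_def by (rule minus_carrier_mat[OF P])
  have X: "X \<in> carrier_mat m m" unfolding X_def by (rule minus_carrier_mat[OF Y])
  have YB: "Y * B = 0\<^sub>m m m"
    unfolding Y_def minus_mult_distrib_mat[OF I P B] PB using B by simp
  have BY: "B * Y = 0\<^sub>m m m"
    unfolding Y_def mult_minus_distrib_mat[OF B I P] BP using B by simp
  have PY: "P * Y = 0\<^sub>m m m"
    unfolding Y_def mult_minus_distrib_mat[OF P I P] PP using P by simp
  have YY: "Y * Y = Y"
    using minus_mult_distrib_mat[OF I P Y, folded Y_def] PY left_mult_one_mat[OF Y] Y by simp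
  have YG: "Y * G = 0\<^sub>m m m"
    unfolding Y_def minus_mult_distrib_mat[OF I P G] PG using G by simp
  have XB: "X * B = P"
    unfolding X_def minus_mult_distrib_mat[OF G Y B] GB YB using P by simp
  have BX: "B * X = P"
    unfolding X_def mult_minus_distrib_mat[OF B G Y] BG BY using P by simp
  have "Y * X = - Y"
    unfolding X_def mult_minus_distrib_mat[OF Y G Y] YG YY using Y by (intro eq_matI) auto
  then have "X * B - Y * X = 1\<^sub>m m"
    unfolding XB Y_def using P by (intro eq_matI) auto
  with X Y YY XB BX BY show ?thesis by auto
qed

lemma commuting_system_imp_inner_inverse:
  fixes B X Y :: "'a::ring_1 mat"
  assumes B: "B \<in> carrier_mat m m" and X: "X \<in> carrier_mat m m" and Y: "Y \<in> carrier_mat m m"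
    and system: "X * B - Y * X = 1\<^sub>m m" and BY: "B * Y = 0\<^sub>m m m"
  shows "B * X * B = B"
proof -
  have "B = B * (X * B - Y * X)" using system B by simp
  also have "\<dots> = B * X * B - B * Y * X"
    using B X Y by (simp add: mult_minus_distrib_mat[of B m m "X * B" m] assoc_mult_mat_dims)
  also have "\<dots> = B * X * B" using BY B X by (simp add: assoc_mult_mat_dims)
  finally show ?thesis by simp
qed

section \<open>Minkowski inverses\<close>

lemma minkowski_inverse_rank_eq:
  assumes A: "A \<in> carrier_mat m n" and inv: "is_minkowski_inverse A Z"
  shows "vec_space.rank m (A * minkowski_adj A) = vec_space.rank n (minkowski_adj A)"
proof -
  have Z: "Z \<in> carrier_mat n m" and AZA: "A * Z * A = A"
    and ZA: "minkowski_adj (Z * A) = Z * A"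
    using inv A unfolding is_minkowski_inverse_def by auto
  have Ad: "minkowski_adj A \<in> carrier_mat n m" using A by simp
  have "minkowski_adj A = minkowski_adj (A * (Z * A))"
    using AZA assoc_mult_mat[OF A Z A] by simp
  also have "\<dots> = Z * (A * minkowski_adj A)"
    using minkowski_adj_mult[OF A mult_carrier_mat[OF Z A]] ZA A Z Ad by simp
  finally have "vec_space.rank n (minkowski_adj A) \<le> vec_space.rank m (A * minkowski_adj A)"
    using rank_mult_le[OF Z mult_carrier_mat[OF A Ad]] by simp
  with rank_mult_le[OF A Ad] show ?thesis by simp
qed

lemma minkowski_inverse_imp_system:
  assumes A: "A \<in> carrier_mat m n" and inv: "is_minkowski_inverse A Z"
  shows "\<exists>X Y. X \<in> carrier_mat m m \<and> Y \<in> carrier_mat m m \<and> Y * Y = Y \<and>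
           X * (A * minkowski_adj A) - Y * X = 1\<^sub>m m \<and>
           (A * minkowski_adj A) * X = X * (A * minkowski_adj A) \<and>
           (A * minkowski_adj A) * Y = 0\<^sub>m m m"
proof -
  define Ad where "Ad = minkowski_adj A"
  define Zd where "Zd = minkowski_adj Z"
  have Z: "Z \<in> carrier_mat n m" and AZA: "A * Z * A = A" and ZAZ: "Z * A * Z = Z"
    and AZ: "minkowski_adj (A * Z) = A * Z" and ZA: "minkowski_adj (Z * A) = Z * A"
    using inv A unfolding is_minkowski_inverse_def by auto
  have Ad: "Ad \<in> carrier_mat n m" and Zd: "Zd \<in> carrier_mat m n"
    unfolding Ad_def Zd_def using A Z by simp_all
  note dims = carrier_matD[OF A] carrier_matD[OF Z] carrier_matD[OF Ad] carrier_matD[OF Zd]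
  have Ad_AZ: "Ad * (A * Z) = Ad"
    using minkowski_adj_mult[OF mult_carrier_mat[OF A Z] A] AZA AZ unfolding Ad_def by simp
  have ZA_Ad: "Z * A * Ad = Ad"
    using minkowski_adj_mult[OF A mult_carrier_mat[OF Z A]] AZA ZA
    unfolding Ad_def by (simp add: assoc_mult_mat_dims dims)
  have AZ_Zd: "A * Z * Zd = Zd"
    using minkowski_adj_mult[OF Z mult_carrier_mat[OF A Z]] ZAZ AZ
    unfolding Zd_def by (simp add: assoc_mult_mat_dims dims)
  have Ad_Zd: "Ad * Zd = Z * A"
    using minkowski_adj_mult[OF Z A] ZA unfolding Ad_def Zd_def by simp
  have Zd_Ad: "Zd * Ad = A * Z"
    using minkowski_adj_mult[OF A Z] AZ unfolding Ad_def Zd_def by simp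
  have "\<exists>X Y. X \<in> carrier_mat m m \<and> Y \<in> carrier_mat m m \<and> Y * Y = Y \<and>
           X * (A * Ad) - Y * X = 1\<^sub>m m \<and> (A * Ad) * X = X * (A * Ad) \<and> (A * Ad) * Y = 0\<^sub>m m m"
  proof (rule group_inverse_solves_system)
    show "A * Ad \<in> carrier_mat m m" "Zd * Z \<in> carrier_mat m m" "A * Z \<in> carrier_mat m m"
      using A Ad Z Zd by simp_all
    show "A * Z * (A * Z) = A * Z"
      using AZA by (simp add: assoc_mult_mat_dims[symmetric] dims)
    have "A * Ad * (Zd * Z) = A * (Ad * Zd) * Z" by (simp add: assoc_mult_mat_dims dims)
    also have "\<dots> = A * Z * A * Z" unfolding Ad_Zd by (simp add: assoc_mult_mat_dims dims)
    finally show "A * Ad * (Zd * Z) = A * Z" using AZA by simp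
    show "Zd * Z * (A * Ad) = A * Z"
      using ZA_Ad Zd_Ad by (simp add: assoc_mult_mat_dims dims)
    show "A * Z * (A * Ad) = A * Ad"
      using AZA by (simp add: assoc_mult_mat_dims[symmetric] dims)
    show "A * Ad * (A * Z) = A * Ad"
      using Ad_AZ by (simp add: assoc_mult_mat_dims dims)
    show "A * Z * (Zd * Z) = Zd * Z"
      using AZ_Zd by (simp add: assoc_mult_mat_dims[symmetric] dims)
  qed
  then show ?thesis unfolding Ad_def .
qed

lemma system_imp_minkowski_inverse:
  assumes A: "A \<in> carrier_mat m n"
    and rank: "vec_space.rank m (A * minkowski_adj A) = vec_space.rank n (minkowski_adj A)"
    and X: "X \<in> carrier_mat m m" and Y: "Y \<in> carrier_mat m m"
    and system: "X * (A * minkowski_adj A) - Y * X = 1\<^sub>m m"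
    and comm: "(A * minkowski_adj A) * X = X * (A * minkowski_adj A)"
    and BY: "(A * minkowski_adj A) * Y = 0\<^sub>m m m"
  shows "is_minkowski_inverse A (minkowski_adj A * X)"
proof -
  define Ad where "Ad = minkowski_adj A"
  define B where "B = A * Ad"
  define P where "P = B * X"
  have Ad: "Ad \<in> carrier_mat n m" unfolding Ad_def using A by simp
  have B: "B \<in> carrier_mat m m" unfolding B_def using A Ad by simp
  have P: "P \<in> carrier_mat m m" unfolding P_def using B X by simp
  have Xd: "minkowski_adj X \<in> carrier_mat m m" using X by simp
  note dims = carrier_matD[OF A] carrier_matD[OF Ad] carrier_matD[OF B] carrier_matD[OF X]
    carrier_matD[OF P] carrier_matD[OF Xd]
  have adj_Ad: "minkowski_adj Ad = A" unfolding Ad_def by (rule minkowski_adj_adj[OF A])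
  have adj_B: "minkowski_adj B = B"
    unfolding B_def using minkowski_adj_mult[OF A Ad] adj_Ad by (simp add: Ad_def[symmetric])
  have BXB: "B * X * B = B"
    using commuting_system_imp_inner_inverse[OF B X Y] system BY unfolding B_def Ad_def by simp
  have XB: "X * B = P" unfolding P_def B_def Ad_def using comm by simp
  have BP: "B * P = B" using BXB unfolding XB[symmetric] by (simp add: assoc_mult_mat_dims dims)
  have adj_P: "minkowski_adj P = P"
  proof -
    have adj_P_B: "minkowski_adj P * B = B"
      using minkowski_adj_mult[OF B P] adj_B BP by simp
    have adj_P_eq: "minkowski_adj P = minkowski_adj X * B"
      using minkowski_adj_mult[OF B X] adj_B unfolding P_def by simp
    have "minkowski_adj P = minkowski_adj X * (B * P)" unfolding BP by (rule adj_P_eq)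
    also have "\<dots> = minkowski_adj P * P" unfolding adj_P_eq by (simp add: assoc_mult_mat_dims dims)
    also have "\<dots> = minkowski_adj P * B * X" unfolding P_def by (simp add: assoc_mult_mat_dims dims)
    also have "\<dots> = P" unfolding adj_P_B P_def[symmetric] ..
    finally show ?thesis .
  qed
  have Ad_P: "Ad * P = Ad"
  proof -
    have "A * Ad * P = A * Ad * 1\<^sub>m m" using BP right_mult_one_mat[OF B] unfolding B_def by simp
    then have "Ad * P = Ad * 1\<^sub>m m"
      by (rule rank_mult_eq_cancel_left[OF A Ad P one_carrier_mat rank[folded Ad_def]])
    then show ?thesis using right_mult_one_mat[OF Ad] by simp
  qed
  have P_A: "P * A = A"
    using minkowski_adj_mult[OF Ad P] Ad_P adj_P adj_Ad by simp
  have Ad_Xd: "Ad * minkowski_adj X = Ad * X"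
  proof -
    have "B * minkowski_adj X = B * X"
      using minkowski_adj_mult[OF X B] adj_B adj_P XB unfolding P_def by simp
    then have "A * Ad * minkowski_adj X = A * Ad * X" unfolding B_def .
    then show ?thesis by (rule rank_mult_eq_cancel_left[OF A Ad Xd X rank[folded Ad_def]])
  qed
  have AZ: "A * (Ad * X) = P" unfolding P_def B_def by (simp add: assoc_mult_mat_dims dims)
  show ?thesis
    unfolding is_minkowski_inverse_def Ad_def[symmetric]
  proof (intro conjI)
    show "Ad * X \<in> carrier_mat (dim_col A) (dim_row A)" using Ad X A by simp
    show "A * (Ad * X) * A = A" unfolding AZ by (rule P_A)
    have "Ad * X * A * (Ad * X) = Ad * (X * B) * X"
      unfolding B_def by (simp add: assoc_mult_mat_dims dims)
    then show "Ad * X * A * (Ad * X) = Ad * X"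
      unfolding XB Ad_P by (simp add: assoc_mult_mat_dims[symmetric] dims)
    show "minkowski_adj (A * (Ad * X)) = A * (Ad * X)" unfolding AZ by (rule adj_P)
    have "minkowski_adj (Ad * X * A) = Ad * minkowski_adj X * A"
      using minkowski_adj_mult[OF mult_carrier_mat[OF Ad X] A] minkowski_adj_mult[OF Ad X] adj_Ad A Ad X
      unfolding Ad_def by (simp add: assoc_mult_mat_dims dims)
    then show "minkowski_adj (Ad * X * A) = Ad * X * A" unfolding Ad_Xd .
  qed
qed

theorem theorem6p4:
  fixes A :: "complex mat" and m n :: nat
  assumes "A \<in> carrier_mat m n" and "0 < m" and "0 < n"
  shows "((\<exists>Z. is_minkowski_inverse A Z) \<longleftrightarrow>
           (vec_space.rank m (A * minkowski_adj A) = vec_space.rank n (minkowski_adj A) \<and>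
            (\<exists>X Y. X \<in> carrier_mat m m \<and> Y \<in> carrier_mat m m \<and> Y * Y = Y \<and>
                   X * (A * minkowski_adj A) - Y * X = 1\<^sub>m m \<and>
                   (A * minkowski_adj A) * X = X * (A * minkowski_adj A) \<and>
                   (A * minkowski_adj A) * Y = 0\<^sub>m m m)))
       \<and> (\<forall>X Y. (\<exists>Z. is_minkowski_inverse A Z) \<and>
                 X \<in> carrier_mat m m \<and> Y \<in> carrier_mat m m \<and> Y * Y = Y \<and>
                 X * (A * minkowski_adj A) - Y * X = 1\<^sub>m m \<and>
                 (A * minkowski_adj A) * X = X * (A * minkowski_adj A) \<and>
                 (A * minkowski_adj A) * Y = 0\<^sub>m m m
              \<longrightarrow> is_minkowski_inverse A (minkowski_adj A * X))"
  using minkowski_inverse_rank_eq[OF assms(1)] minkowski_inverse_imp_system[OF assms(1)]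
    system_imp_minkowski_inverse[OF assms(1)]
  by blast

end
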